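(* Let $(\gamma_n)_n$ and $(\delta_n)_n$ be widely separated sequences of sub-probability measures on $X\otimes\mathbb R^d$. If $f$ is bounded and continuous on $X$ and $W\in\mathfrak C_k$ for some $k\ge2$, then $$\lim_{n\to\infty}\Big|\int\prod_{i=1}^kf(x_i)\,W(y_1,\dots,y_k)\prod_{i=1}^k[\gamma_n+\delta_n](\mathrm dx_i,\mathrm dy_i)-\int\prod_{i=1}^kf(x_i)\,W\prod_{i=1}^k\gamma_n(\mathrm dx_i,\mathrm dy_i)-\int\prod_{i=1}^kf(x_i)\,W\prod_{i=1}^k\delta_n(\mathrm dx_i,\mathrm dy_i)\Big|=0.$$
   Context: $X$ is a complete separable metric space, $d\ge1$. For $k\ge2$, $\mathfrak C_k$ is the space of continuous functions $W$ on $(\mathbb R^d)^k$ with $W(y_1+a,\dots,y_k+a)=W(y_1,\dots,y_k)$ for all $a\in\mathbb R^d$ and $W(y_1,\dots,y_k)\to0$ as $\sup_{i,j}|y_i-y_j|\to\infty$. For a sub-probability measure $\gamma$ on $X\otimes\mathbb R^d$, $\gamma^{(2)}$ denotes its marginal on $\mathbb R^d$. Two sequences $(\gamma_n)$, $(\delta_n)$ of sub-probability measures on $X\otimes\mathbb R^d$ are widely separated if $\lim_{n\to\infty}\int V(y_1-y_2)\,\gamma_n^{(2)}(\mathrm dy_1)\,\delta_n^{(2)}(\mathrm dy_2)=0$ for some strictly positive continuous function $V$ on $\mathbb R^d$ tending to $0$ at infinity. *)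

theory Defs
  imports "HOL-Analysis.Analysis" "HOL-Probability.Probability"
begin

definition subprob_on :: "('a::topological_space \<times> 'b::topological_space) measure \<Rightarrow> bool" where
  "subprob_on M \<longleftrightarrow> sets M = sets borel \<and> subprob_space M"

definition add_measure :: "'a measure \<Rightarrow> 'a measure \<Rightarrow> 'a measure" where
  "add_measure M N = measure_of (space M) (sets M) (\<lambda>A. emeasure M A + emeasure N A)"

definition marg2 :: "('a::topological_space \<times> 'b::topological_space) measure \<Rightarrow> 'b measure" where
  "marg2 M = distr M borel snd"

definition widely_separated ::
  "(nat \<Rightarrow> ('a::topological_space \<times> 'b::euclidean_space) measure) \<Rightarrow> (nat \<Rightarrow> ('a \<times> 'b) measure) \<Rightarrow> bool" where
  "widely_separated \<gamma> \<delta> \<longleftrightarrow>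
     (\<exists>V :: 'b \<Rightarrow> real. continuous_on UNIV V \<and> (\<forall>y. V y > 0) \<and> (V \<longlongrightarrow> 0) at_infinity \<and>
        (\<lambda>n. \<integral>p. V (fst p - snd p) \<partial>(marg2 (\<gamma> n) \<Otimes>\<^sub>M marg2 (\<delta> n))) \<longlonglongrightarrow> 0)"

text \<open>The class C_k, with the k coordinates indexed by a finite type 'k (k = CARD('k)).\<close>
definition frakC :: "(('k::finite \<Rightarrow> 'b::euclidean_space) \<Rightarrow> real) \<Rightarrow> bool" where
  "frakC W \<longleftrightarrow> continuous_on UNIV W \<and>
     (\<forall>y a. W (\<lambda>i. y i + a) = W y) \<and>
     (\<forall>e>0. \<exists>R. \<forall>y. (\<exists>i j. dist (y i) (y j) > R) \<longrightarrow> \<bar>W y\<bar> < e)"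

end

theory Submission
  imports Defs
begin

(* Put mu = gamma + delta and let p be the density of gamma with respect to mu, so that
   gamma = p mu and delta = (1 - p) mu. Then gamma^k and delta^k have the densities
   prod_i p(z_i) and prod_i (1 - p(z_i)) with respect to mu^k, and the quantity in question is
   the mu^k-integral of the integrand against the weight 1 - prod_i p(z_i) - prod_i (1 - p(z_i)).
   This weight lies between 0 and sum_{j <> i} p(z_i) (1 - p(z_j)) + (1 - p(z_i)) p(z_j), so only
   configurations with one coordinate drawn from gamma and another from delta contribute.
   Since W is in C_k, for every eps > 0 there is C with |W y| <= eps + C V(y_a - y_b) for all a, b,
   and the mu^k-integral of p(z_a) (1 - p(z_b)) V(y_a - y_b) equals m^(k-2) times the integral
   of V(y_1 - y_2) against gamma^(2) x delta^(2), where m <= 2 is the total mass of mu; this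
   tends to 0 by wide separation. *)

lemma one_minus_prod_le_sum:
  fixes a :: "'i \<Rightarrow> real"
  assumes "finite I" "\<And>i. i \<in> I \<Longrightarrow> 0 \<le> a i \<and> a i \<le> 1"
  shows "1 - (\<Prod>i\<in>I. a i) \<le> (\<Sum>i\<in>I. 1 - a i)"
  using assms
proof (induction I rule: finite_induct)
  case (insert i I)
  have "0 \<le> (1 - a i) * (1 - (\<Prod>j\<in>I. a j))"
    using insert.prems by (intro mult_nonneg_nonneg) (auto intro!: prod_le_1)
  then show ?case using insert by (simp add: algebra_simps)
qed simp

lemma one_minus_prod_minus_prod_compl:
  fixes a :: "'i \<Rightarrow> real"
  assumes I: "finite I" "i \<in> I" and a01: "\<And>j. j \<in> I \<Longrightarrow> 0 \<le> a j \<and> a j \<le> 1"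
  shows "0 \<le> 1 - (\<Prod>j\<in>I. a j) - (\<Prod>j\<in>I. 1 - a j)"
    and "1 - (\<Prod>j\<in>I. a j) - (\<Prod>j\<in>I. 1 - a j) \<le> (\<Sum>j\<in>I - {i}. a i * (1 - a j) + (1 - a i) * a j)"
proof -
  define J where "J = I - {i}"
  have J: "finite J" "I = insert i J" "i \<notin> J" "\<And>j. j \<in> J \<Longrightarrow> 0 \<le> a j \<and> a j \<le> 1"
    using I a01 by (auto simp: J_def)
  define P where "P = (\<Prod>j\<in>J. a j)"
  define Q where "Q = (\<Prod>j\<in>J. 1 - a j)"
  have PQ: "0 \<le> P" "P \<le> 1" "0 \<le> Q" "Q \<le> 1"
    unfolding P_def Q_def using J(4) by (auto intro!: prod_nonneg prod_le_1)
  have ai: "0 \<le> a i" "a i \<le> 1" using a01 I by auto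
  have split: "1 - (\<Prod>j\<in>I. a j) - (\<Prod>j\<in>I. 1 - a j) = a i * (1 - P) + (1 - a i) * (1 - Q)"
    unfolding P_def Q_def using J by (simp add: algebra_simps)
  then show "0 \<le> 1 - (\<Prod>j\<in>I. a j) - (\<Prod>j\<in>I. 1 - a j)"
    using ai PQ by simp
  have "1 - P \<le> (\<Sum>j\<in>J. 1 - a j)"
    unfolding P_def using J by (intro one_minus_prod_le_sum) auto
  moreover have "1 - Q \<le> (\<Sum>j\<in>J. a j)"
    unfolding Q_def using J one_minus_prod_le_sum[of J "\<lambda>j. 1 - a j"] by simp
  ultimately have "a i * (1 - P) + (1 - a i) * (1 - Q) \<le> a i * (\<Sum>j\<in>J. 1 - a j) + (1 - a i) * (\<Sum>j\<in>J. a j)"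
    using ai by (intro add_mono mult_left_mono) auto
  then show "1 - (\<Prod>j\<in>I. a j) - (\<Prod>j\<in>I. 1 - a j) \<le> (\<Sum>j\<in>I - {i}. a i * (1 - a j) + (1 - a i) * a j)"
    unfolding split J_def by (simp add: sum.distrib sum_distrib_left)
qed

lemma one_minus_prod_minus_prod_compl_mult_le:
  fixes a :: "'i \<Rightarrow> real"
  assumes I: "finite I" "i \<in> I" and a01: "\<And>j. j \<in> I \<Longrightarrow> 0 \<le> a j \<and> a j \<le> 1"
    and "0 \<le> w" "0 \<le> e" and w: "\<And>j k. w \<le> e + C * v j k"
  shows "(1 - (\<Prod>j\<in>I. a j) - (\<Prod>j\<in>I. 1 - a j)) * w
    \<le> (\<Sum>j\<in>I - {i}. 2 * e + C * (a i * (1 - a j) * v i j) + C * (a j * (1 - a i) * v j i))"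
proof -
  have weighted: "t * w \<le> e + C * (t * v j k)" if "0 \<le> t" "t \<le> 1" for t j k
  proof -
    have "t * w \<le> t * (e + C * v j k)" using that w by (intro mult_left_mono) auto
    also have "\<dots> \<le> e + C * (t * v j k)"
      using that \<open>0 \<le> e\<close> mult_left_le_one_le[of e t] by (simp add: algebra_simps)
    finally show ?thesis .
  qed
  have "(1 - (\<Prod>j\<in>I. a j) - (\<Prod>j\<in>I. 1 - a j)) * w \<le> (\<Sum>j\<in>I - {i}. a i * (1 - a j) + (1 - a i) * a j) * w"
    using one_minus_prod_minus_prod_compl(2)[OF I a01] \<open>0 \<le> w\<close> by (intro mult_right_mono)
  also have "\<dots> = (\<Sum>j\<in>I - {i}. a i * (1 - a j) * w + a j * (1 - a i) * w)"
    unfolding sum_distrib_right by (intro sum.cong refl) (simp add: algebra_simps)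
  also have "\<dots> \<le> (\<Sum>j\<in>I - {i}. 2 * e + C * (a i * (1 - a j) * v i j) + C * (a j * (1 - a i) * v j i))"
  proof (intro sum_mono)
    fix j assume "j \<in> I - {i}"
    then have "0 \<le> a i \<and> a i \<le> 1" "0 \<le> a j \<and> a j \<le> 1" using a01 I by auto
    then have "a i * (1 - a j) * w \<le> e + C * (a i * (1 - a j) * v i j)"
      "a j * (1 - a i) * w \<le> e + C * (a j * (1 - a i) * v j i)"
      by (auto intro!: weighted mult_le_one)
    then show "a i * (1 - a j) * w + a j * (1 - a i) * w
      \<le> 2 * e + C * (a i * (1 - a j) * v i j) + C * (a j * (1 - a i) * v j i)" by linarith
  qed
  finally show ?thesis .
qed

lemma abs_prod_le_power:
  fixes b :: "'i \<Rightarrow> real"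
  assumes "\<And>j. j \<in> I \<Longrightarrow> \<bar>b j\<bar> \<le> B"
  shows "\<bar>\<Prod>j\<in>I. b j\<bar> \<le> B ^ card I"
  unfolding abs_prod using assms by (subst prod_constant[symmetric]) (intro prod_mono, auto)

lemma abs_one_minus_prod_minus_prod_compl_mult_le:
  fixes a b :: "'i \<Rightarrow> real"
  assumes I: "finite I" "i \<in> I" and a01: "\<And>j. j \<in> I \<Longrightarrow> 0 \<le> a j \<and> a j \<le> 1"
    and b: "\<And>j. j \<in> I \<Longrightarrow> \<bar>b j\<bar> \<le> B" and "0 \<le> e" and w: "\<And>j k. \<bar>w\<bar> \<le> e + C * v j k"
  shows "\<bar>(1 - (\<Prod>j\<in>I. a j) - (\<Prod>j\<in>I. 1 - a j)) * ((\<Prod>j\<in>I. b j) * w)\<bar>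
    \<le> B ^ card I * (\<Sum>j\<in>I - {i}. 2 * e + C * (a i * (1 - a j) * v i j) + C * (a j * (1 - a i) * v j i))"
proof -
  have weight_nonneg: "0 \<le> 1 - (\<Prod>j\<in>I. a j) - (\<Prod>j\<in>I. 1 - a j)"
    by (rule one_minus_prod_minus_prod_compl(1)[OF I a01])
  have "\<bar>(1 - (\<Prod>j\<in>I. a j) - (\<Prod>j\<in>I. 1 - a j)) * ((\<Prod>j\<in>I. b j) * w)\<bar>
      = \<bar>\<Prod>j\<in>I. b j\<bar> * ((1 - (\<Prod>j\<in>I. a j) - (\<Prod>j\<in>I. 1 - a j)) * \<bar>w\<bar>)"
    using weight_nonneg by (simp add: abs_mult)
  also have "\<dots> \<le> B ^ card I * (\<Sum>j\<in>I - {i}. 2 * e + C * (a i * (1 - a j) * v i j) + C * (a j * (1 - a i) * v j i))"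
    using abs_prod_le_power[OF b] weight_nonneg order.trans[OF abs_ge_zero b[OF I(2)]]
    by (intro mult_mono one_minus_prod_minus_prod_compl_mult_le[OF I a01 abs_ge_zero \<open>0 \<le> e\<close> w]) auto
  finally show ?thesis .
qed

lemma mass_le_2_power_bound:
  fixes m e C I :: real
  assumes "0 \<le> m" "m \<le> 2" "0 \<le> e" "0 \<le> C" "0 \<le> I"
  shows "2 * e * m ^ n + 2 * C * (m ^ (n - 2) * I) \<le> 2 ^ (n + 1) * (e + C * I)"
proof -
  have "m ^ n \<le> 2 ^ n" using assms(1,2) by (intro power_mono)
  moreover have "m ^ (n - 2) \<le> 2 ^ (n - 2)"
    using assms(1,2) by (intro power_mono)
  then have "m ^ (n - 2) \<le> 2 ^ n"
    by (rule order.trans) (intro power_increasing, auto)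
  ultimately show ?thesis
    using assms(3-5) by (simp add: algebra_simps mult_left_mono mult_right_mono add_mono)
qed

lemma LIMSEQ_zero_if_eps_bound:
  fixes x I :: "nat \<Rightarrow> real"
  assumes "I \<longlonglongrightarrow> 0" "0 \<le> K"
    and bound: "\<And>e. 0 < e \<Longrightarrow> \<exists>C. \<forall>n. \<bar>x n\<bar> \<le> K * (e + C * I n)"
  shows "x \<longlonglongrightarrow> 0"
proof (rule LIMSEQ_I)
  fix r :: real assume "0 < r"
  define e where "e = r / (2 * (K + 1))"
  have "0 < e" using \<open>0 < r\<close> \<open>0 \<le> K\<close> by (simp add: e_def)
  then obtain C where C: "\<And>n. \<bar>x n\<bar> \<le> K * (e + C * I n)" using bound by blast
  have "(\<lambda>n. C * I n) \<longlonglongrightarrow> 0"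
    using tendsto_mult[OF tendsto_const assms(1), of C] by simp
  then obtain N where N: "\<And>n. N \<le> n \<Longrightarrow> \<bar>C * I n\<bar> < e"
    using LIMSEQ_D[OF _ \<open>0 < e\<close>] by fastforce
  have "\<bar>x n\<bar> < r" if "N \<le> n" for n
  proof -
    have "e + C * I n \<le> 2 * e"
      using N[OF that] by (simp add: abs_less_iff)
    then have "\<bar>x n\<bar> \<le> K * (2 * e)"
      using C[of n] mult_left_mono[OF _ \<open>0 \<le> K\<close>] by (meson order.trans)
    also have "\<dots> < r"
      using \<open>0 < r\<close> \<open>0 \<le> K\<close> by (simp add: e_def field_simps)
    finally show ?thesis .
  qed
  then show "\<exists>N. \<forall>n\<ge>N. norm (x n - 0) < r" by auto
qed

section \<open>Functions of class C_k\<close>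

lemma frakC_bounded:
  fixes W :: "('k::finite \<Rightarrow> 'b::euclidean_space) \<Rightarrow> real"
  assumes "frakC W"
  shows "bounded (range W)"
proof -
  have W_cont: "continuous_on UNIV W" and W_shift: "\<And>y a. W (\<lambda>i. y i + a) = W y"
    and W_decay: "\<And>e. e > 0 \<Longrightarrow> \<exists>R. \<forall>y. (\<exists>i j. dist (y i) (y j) > R) \<longrightarrow> \<bar>W y\<bar> < e"
    using assms unfolding frakC_def by auto
  obtain R where R: "\<And>y. (\<exists>i j. dist (y i) (y j) > R) \<Longrightarrow> \<bar>W y\<bar> < 1"
    using W_decay[of 1] by auto
  define S where "S = PiE (UNIV::'k set) (\<lambda>_. cball (0::'b) R)"
  have "compactin (product_topology (\<lambda>_. euclidean) UNIV) S"
    unfolding S_def by (subst compactin_PiE) auto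
  then have "compact S" by (simp add: euclidean_product_topology)
  then have "bounded (W ` S)"
    using W_cont by (intro compact_imp_bounded compact_continuous_image) (auto intro: continuous_on_subset)
  then obtain M where M: "\<And>y. y \<in> S \<Longrightarrow> \<bar>W y\<bar> \<le> M"
    by (auto simp: bounded_iff)
  have "\<bar>W y\<bar> \<le> max M 1" for y
  proof (cases "\<exists>i j. dist (y i) (y j) > R")
    case True
    then show ?thesis using R[of y] by simp
  next
    case False
    fix i0 :: 'k
    have "(\<lambda>i. y i + - y i0) \<in> S"
      using False unfolding S_def by (auto simp: dist_norm not_less)
    then show ?thesis using M W_shift[of y "- y i0"] by fastforce
  qed
  then show ?thesis by (auto simp: bounded_iff)
qed

lemma vanishing_at_infinity_bounded:
  fixes V :: "'b::euclidean_space \<Rightarrow> real"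
  assumes "continuous_on UNIV V" "(V \<longlongrightarrow> 0) at_infinity"
  shows "bounded (range V)"
proof -
  obtain R where R: "\<And>y. R \<le> norm y \<Longrightarrow> \<bar>V y\<bar> < 1"
    using tendstoD[OF assms(2), of 1] by (auto simp: eventually_at_infinity)
  have "bounded (V ` cball 0 R)"
    using assms(1) by (intro compact_imp_bounded compact_continuous_image) (auto intro: continuous_on_subset)
  then obtain M where M: "\<forall>y\<in>cball 0 R. \<bar>V y\<bar> \<le> M"
    by (auto simp: bounded_iff)
  have "\<bar>V y\<bar> \<le> max M 1" for y
  proof (cases "R \<le> norm y")
    case False
    then have "y \<in> cball 0 R" by simp
    then show ?thesis using M by fastforce
  qed (use R in fastforce)
  then show ?thesis by (auto simp: bounded_iff)
qed

lemma positive_continuous_bounded_below_on_cball: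
  fixes V :: "'b::euclidean_space \<Rightarrow> real"
  assumes "continuous_on UNIV V" "\<And>y. 0 < V y"
  obtains c where "0 < c" "\<And>y. norm y \<le> R \<Longrightarrow> c \<le> V y"
proof (cases "0 \<le> R")
  case True
  then obtain x where "x \<in> cball 0 R" "\<And>y. y \<in> cball 0 R \<Longrightarrow> V x \<le> V y"
    using continuous_attains_inf[OF compact_cball _ continuous_on_subset[OF assms(1)], of 0 R] by auto
  then show ?thesis using that[of "V x"] assms(2) by auto
next
  case False
  then show ?thesis using that[of 1] norm_ge_zero by (meson order.trans linorder_not_le zero_less_one)
qed

lemma frakC_le_eps_plus_multiple:
  fixes W :: "('k::finite \<Rightarrow> 'b::euclidean_space) \<Rightarrow> real" and V :: "'b \<Rightarrow> real"
  assumes "frakC W" "continuous_on UNIV V" "\<And>y. 0 < V y" "0 < e"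
  obtains C where "0 \<le> C" "\<And>y a b. \<bar>W y\<bar> \<le> e + C * V (y a - y b)"
proof -
  obtain R where R: "\<And>y. (\<exists>i j. dist (y i) (y j) > R) \<Longrightarrow> \<bar>W y\<bar> < e"
    using assms(1,4) unfolding frakC_def by blast
  obtain c where c: "0 < c" "\<And>y. norm y \<le> R \<Longrightarrow> c \<le> V y"
    using positive_continuous_bounded_below_on_cball[OF assms(2,3)] by blast
  obtain M where M: "\<And>y. \<bar>W y\<bar> \<le> M"
    using frakC_bounded[OF assms(1)] by (auto simp: bounded_iff)
  then have "0 \<le> M" by (meson abs_ge_zero order.trans)
  have "\<bar>W y\<bar> \<le> e + M / c * V (y a - y b)" for y a b
  proof (cases "dist (y a) (y b) > R")
    case True
    moreover have "0 \<le> M / c * V (y a - y b)"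
      using \<open>0 \<le> M\<close> c(1) assms(3)[of "y a - y b"] by simp
    ultimately show ?thesis using R[of y] by fastforce
  next
    case False
    then have "M \<le> M / c * V (y a - y b)"
      using c \<open>0 \<le> M\<close> by (simp add: dist_norm field_simps mult_left_mono)
    then show ?thesis using M[of y] assms(4) by linarith
  qed
  then show ?thesis using that[of "M / c"] \<open>0 \<le> M\<close> c(1) by simp
qed

section \<open>Sums of measures and densities\<close>

lemma sets_add_measure [simp]: "sets (add_measure M N) = sets M"
  unfolding add_measure_def by (simp add: sets.space_closed)

lemma space_add_measure [simp]: "space (add_measure M N) = space M"
  unfolding add_measure_def by (simp add: sets.space_closed)

lemma emeasure_add_measure:
  assumes "sets N = sets M" "A \<in> sets M"
  shows "emeasure (add_measure M N) A = emeasure M A + emeasure N A"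
  unfolding add_measure_def
proof (rule emeasure_measure_of_sigma)
  show "countably_additive (sets M) (\<lambda>A. emeasure M A + emeasure N A)"
  proof (rule countably_additiveI)
    fix A :: "nat \<Rightarrow> _"
    assume "range A \<subseteq> sets M" "disjoint_family A" "\<Union> (range A) \<in> sets M"
    then show "(\<Sum>i. emeasure M (A i) + emeasure N (A i)) = emeasure M (\<Union> (range A)) + emeasure N (\<Union> (range A))"
      using assms(1) by (simp add: suminf_add[symmetric] suminf_emeasure)
  qed
qed (auto simp: positive_def assms(2) sets.sigma_algebra_axioms)

lemma measure_add_measure:
  assumes "sets N = sets M" "finite_measure M" "finite_measure N" "A \<in> sets M"
  shows "measure (add_measure M N) A = measure M A + measure N A"
proof -
  have "emeasure (add_measure M N) A = ennreal (measure M A + measure N A)"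
    using assms by (simp add: emeasure_add_measure finite_measure.emeasure_eq_measure ennreal_plus)
  then show ?thesis
    by (metis Sigma_Algebra.measure_def add_nonneg_nonneg enn2real_ennreal measure_nonneg)
qed

lemma finite_measure_add_measure:
  assumes "sets N = sets M" "finite_measure M" "finite_measure N"
  shows "finite_measure (add_measure M N)"
proof (rule finite_measureI)
  have "space N = space M" using assms(1) by (rule sets_eq_imp_space_eq)
  then show "emeasure (add_measure M N) (space (add_measure M N)) \<noteq> \<infinity>"
    using assms by (simp add: emeasure_add_measure finite_measure.emeasure_finite)
qed

lemma absolutely_continuous_add_measure:
  assumes "sets N = sets M"
  shows "absolutely_continuous (add_measure M N) M" "absolutely_continuous (add_measure M N) N"
  using assms by (auto simp: absolutely_continuous_def null_sets_def emeasure_add_measure)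

lemma (in finite_measure) finite_measure_density_bounded:
  assumes "h \<in> borel_measurable M" "\<And>x. h x \<le> c" "c \<noteq> \<infinity>"
  shows "finite_measure (density M h)"
proof (rule finite_measureI)
  have "emeasure (density M h) (space M) = (\<integral>\<^sup>+x. h x \<partial>M)"
    using assms(1) by (simp add: emeasure_density)
  also have "\<dots> \<le> (\<integral>\<^sup>+x. c \<partial>M)"
    using assms(2) by (intro nn_integral_mono)
  also have "\<dots> = c * emeasure M (space M)" by simp
  also have "\<dots> < \<infinity>" using assms(3) by (simp add: less_top[symmetric] ennreal_mult_eq_top_iff)
  finally show "emeasure (density M h) (space (density M h)) \<noteq> \<infinity>" by simp
qed

lemma add_measure_eq_densities:
  assumes sets_eq: "sets N = sets M" and "finite_measure M" "finite_measure N"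
  obtains p where "p \<in> borel_measurable M" "\<And>x. 0 \<le> p x \<and> p x \<le> 1"
    "M = density (add_measure M N) (\<lambda>x. ennreal (p x))"
    "N = density (add_measure M N) (\<lambda>x. ennreal (1 - p x))"
proof -
  define \<mu> where "\<mu> = add_measure M N"
  interpret \<mu>: finite_measure \<mu>
    unfolding \<mu>_def using assms by (rule finite_measure_add_measure)
  define g where "g = RN_deriv \<mu> M"
  define h where "h = RN_deriv \<mu> N"
  have ac: "absolutely_continuous \<mu> M" "absolutely_continuous \<mu> N"
    unfolding \<mu>_def using sets_eq by (rule absolutely_continuous_add_measure)+
  have g: "density \<mu> g = M"
    unfolding g_def by (rule \<mu>.density_RN_deriv[OF ac(1)]) (simp add: \<mu>_def)
  have h: "density \<mu> h = N"
    unfolding h_def by (rule \<mu>.density_RN_deriv[OF ac(2)]) (simp add: \<mu>_def sets_eq)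
  have [measurable]: "g \<in> borel_measurable \<mu>" "h \<in> borel_measurable \<mu>"
    unfolding g_def h_def by auto
  have "density \<mu> (\<lambda>x. g x + h x) = density \<mu> (\<lambda>_. 1)"
  proof (rule measure_eqI)
    fix A assume "A \<in> sets (density \<mu> (\<lambda>x. g x + h x))"
    then have A: "A \<in> sets \<mu>" by simp
    have "emeasure (density \<mu> (\<lambda>x. g x + h x)) A = emeasure M A + emeasure N A"
      using A by (simp add: emeasure_density_add[symmetric] g h)
    also have "\<dots> = emeasure \<mu> A"
      using A sets_eq by (simp add: emeasure_add_measure \<mu>_def)
    finally show "emeasure (density \<mu> (\<lambda>x. g x + h x)) A = emeasure (density \<mu> (\<lambda>_. 1)) A"
      by (simp add: density_1)
  qed simp
  then have sum_one: "AE x in \<mu>. g x + h x = 1"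
    by (intro \<mu>.density_unique) auto
  \<comment> \<open>Truncating \<open>g\<close> at 1 changes it only on a null set, since \<open>g + h = 1\<close> almost everywhere.\<close>
  define p where "p x = enn2real (min (g x) 1)" for x
  have p: "\<And>x. 0 \<le> p x \<and> p x \<le> 1"
    unfolding p_def by (auto simp: enn2real_leI min_def)
  have "AE x in \<mu>. g x = ennreal (p x) \<and> h x = ennreal (1 - p x)"
    using sum_one
  proof eventually_elim
    case (elim x)
    then have "g x \<le> 1" "h x = 1 - g x"
      by (metis le_iff_add, metis ennreal_add_diff_cancel_left ennreal_add_eq_top ennreal_top_neq_one)
    moreover from \<open>g x \<le> 1\<close> have "g x = ennreal (p x)"
      unfolding p_def by (metis ennreal_top_neq_one ennreal_enn2real_if min_def top.extremum_unique)
    ultimately show ?case using p[of x] by (metis ennreal_1 ennreal_minus)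
  qed
  then have "density \<mu> g = density \<mu> (\<lambda>x. ennreal (p x))"
    "density \<mu> h = density \<mu> (\<lambda>x. ennreal (1 - p x))"
    by (auto intro!: density_cong simp: p_def)
  moreover have "p \<in> borel_measurable \<mu>"
    unfolding p_def by measurable
  then have "p \<in> borel_measurable M"
    by (simp add: \<mu>_def cong: measurable_cong_sets)
  ultimately show ?thesis using that p g h by (simp add: \<mu>_def)
qed

section \<open>Finite products of measures\<close>

lemma (in sigma_finite_measure) product_sigma_finite_const: "product_sigma_finite (\<lambda>_. M)"
  by (simp add: product_sigma_finite_def sigma_finite_measure_axioms)

lemma prod_indicator_eq_indicator_PiE:
  assumes "finite I" "z \<in> extensional I"
  shows "(\<Prod>i\<in>I. indicator (A i) (z i) :: 'c::comm_semiring_1) = indicator (PiE I A) z"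
proof (cases "z \<in> PiE I A")
  case True
  then show ?thesis by (simp add: PiE_iff)
next
  case False
  then obtain i where "i \<in> I" "z i \<notin> A i" using assms(2) by (auto simp: PiE_iff)
  then have "(\<Prod>i\<in>I. indicator (A i) (z i) :: 'c) = 0"
    using assms(1) by (intro prod_zero bexI[of _ i]) auto
  then show ?thesis using False by simp
qed

lemma (in product_sigma_finite) PiM_density:
  assumes I: "finite I" and h[measurable]: "\<And>i. i \<in> I \<Longrightarrow> h i \<in> borel_measurable (M i)"
    and "\<And>i. sigma_finite_measure (density (M i) (h i))"
  shows "PiM I (\<lambda>i. density (M i) (h i)) = density (PiM I M) (\<lambda>z. \<Prod>i\<in>I. h i (z i))"
proof -
  interpret D: product_sigma_finite "\<lambda>i. density (M i) (h i)"
    using assms(3) by (simp add: product_sigma_finite_def)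
  have [measurable]: "(\<lambda>z. \<Prod>i\<in>I. h i (z i)) \<in> borel_measurable (PiM I M)"
    using I by measurable
  show ?thesis
  proof (rule D.PiM_eqI[symmetric, OF I])
    show "sets (density (PiM I M) (\<lambda>z. \<Prod>i\<in>I. h i (z i))) = sets (PiM I (\<lambda>i. density (M i) (h i)))"
      by (simp cong: sets_PiM_cong)
    fix A assume "\<And>i. i \<in> I \<Longrightarrow> A i \<in> sets (density (M i) (h i))"
    then have A[measurable]: "\<And>i. i \<in> I \<Longrightarrow> A i \<in> sets (M i)" by simp
    have "emeasure (density (PiM I M) (\<lambda>z. \<Prod>i\<in>I. h i (z i))) (PiE I A)
        = (\<integral>\<^sup>+z. (\<Prod>i\<in>I. h i (z i)) * indicator (PiE I A) z \<partial>PiM I M)"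
      using I by (intro emeasure_density) (auto intro!: sets_PiM_I_finite)
    also have "\<dots> = (\<integral>\<^sup>+z. (\<Prod>i\<in>I. h i (z i) * indicator (A i) (z i)) \<partial>PiM I M)"
      using I by (intro nn_integral_cong)
        (simp add: prod.distrib prod_indicator_eq_indicator_PiE space_PiM PiE_iff)
    also have "\<dots> = (\<Prod>i\<in>I. \<integral>\<^sup>+x. h i x * indicator (A i) x \<partial>M i)"
      using I by (intro product_nn_integral_prod) auto
    also have "\<dots> = (\<Prod>i\<in>I. emeasure (density (M i) (h i)) (A i))"
      by (intro prod.cong refl) (simp add: emeasure_density)
    finally show "emeasure (density (PiM I M) (\<lambda>z. \<Prod>i\<in>I. h i (z i))) (PiE I A)
        = (\<Prod>i\<in>I. emeasure (density (M i) (h i)) (A i))" .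
  qed
qed

lemma (in product_sigma_finite) integral_PiM_density:
  fixes F :: "('i \<Rightarrow> 'a) \<Rightarrow> real" and h :: "'i \<Rightarrow> 'a \<Rightarrow> real"
  assumes I: "finite I" and h[measurable]: "\<And>i. i \<in> I \<Longrightarrow> h i \<in> borel_measurable (M i)"
    and h_nonneg: "\<And>i x. 0 \<le> h i x"
    and "\<And>i. sigma_finite_measure (density (M i) (\<lambda>x. ennreal (h i x)))"
    and F: "F \<in> borel_measurable (PiM I M)"
  shows "(\<integral>z. F z \<partial>PiM I (\<lambda>i. density (M i) (\<lambda>x. ennreal (h i x))))
       = (\<integral>z. (\<Prod>i\<in>I. h i (z i)) * F z \<partial>PiM I M)"
proof -
  have "PiM I (\<lambda>i. density (M i) (\<lambda>x. ennreal (h i x)))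
      = density (PiM I M) (\<lambda>z. ennreal (\<Prod>i\<in>I. h i (z i)))"
    using PiM_density[OF I, of "\<lambda>i x. ennreal (h i x)"] assms(4) h_nonneg
    by (simp add: prod_ennreal)
  moreover have "(\<lambda>z. \<Prod>i\<in>I. h i (z i)) \<in> borel_measurable (PiM I M)"
    using I by measurable
  ultimately show ?thesis
    using F h_nonneg by (simp add: integral_density prod_nonneg)
qed

lemma (in product_sigma_finite) nn_integral_PiM_pair:
  assumes I: "finite I" and ab: "a \<in> I" "b \<in> I" "a \<noteq> b"
    and g[measurable]: "case_prod g \<in> borel_measurable (M a \<Otimes>\<^sub>M M b)"
  shows "(\<integral>\<^sup>+z. g (z a) (z b) \<partial>PiM I M)
       = (\<Prod>i\<in>I - {a, b}. emeasure (M i) (space (M i))) * (\<integral>\<^sup>+u. g (fst u) (snd u) \<partial>(M a \<Otimes>\<^sub>M M b))"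
proof -
  define J where "J = I - {a, b}"
  have IJ: "{a, b} \<inter> J = {}" "finite J" "{a, b} \<union> J = I" using I ab by (auto simp: J_def)
  have g_ab[measurable]: "(\<lambda>z. g (z a) (z b)) \<in> borel_measurable (PiM K M)" if "a \<in> K" "b \<in> K" for K
    using measurable_compose[OF measurable_Pair[OF measurable_component_singleton[OF that(1)]
          measurable_component_singleton[OF that(2)]] g] by simp
  have "(\<integral>\<^sup>+z. g (z a) (z b) \<partial>PiM I M)
      = (\<integral>\<^sup>+x. \<integral>\<^sup>+y. g (merge {a, b} J (x, y) a) (merge {a, b} J (x, y) b) \<partial>PiM J M \<partial>PiM {a, b} M)"
    unfolding IJ(3)[symmetric] by (rule product_nn_integral_fold[OF IJ(1) _ IJ(2)]) (use IJ ab in auto)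
  also have "\<dots> = (\<integral>\<^sup>+x. g (x a) (x b) * emeasure (PiM J M) (space (PiM J M)) \<partial>PiM {a, b} M)"
    by (intro nn_integral_cong) (simp add: merge_def)
  also have "\<dots> = emeasure (PiM J M) (space (PiM J M)) * (\<integral>\<^sup>+x. g (x a) (x b) \<partial>PiM {a, b} M)"
    by (subst nn_integral_multc) (auto simp: mult.commute)
  also have "emeasure (PiM J M) (space (PiM J M)) = (\<Prod>i\<in>J. emeasure (M i) (space (M i)))"
    unfolding space_PiM using IJ(2) by (rule emeasure_PiM) auto
  also have "(\<integral>\<^sup>+x. g (x a) (x b) \<partial>PiM {a, b} M) = (\<integral>\<^sup>+u. g (fst u) (snd u) \<partial>(M a \<Otimes>\<^sub>M M b))"
    using ab by (intro product_nn_integral_pair) auto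
  finally show ?thesis unfolding J_def .
qed

lemma (in finite_measure) emeasure_PiM_const_space:
  assumes "finite I"
  shows "emeasure (PiM I (\<lambda>_. M)) (space (PiM I (\<lambda>_. M))) = emeasure M (space M) ^ card I"
proof -
  interpret product_sigma_finite "\<lambda>_. M" by (rule product_sigma_finite_const)
  show ?thesis
    unfolding space_PiM using assms by (subst emeasure_PiM) (auto simp: prod_constant)
qed

lemma (in finite_measure) finite_measure_PiM_const:
  "finite I \<Longrightarrow> finite_measure (PiM I (\<lambda>_. M))"
  by (rule finite_measureI) (simp add: emeasure_PiM_const_space power_eq_top_ennreal)

lemma (in finite_measure) measure_PiM_const_space:
  "finite I \<Longrightarrow> measure (PiM I (\<lambda>_. M)) (space (PiM I (\<lambda>_. M))) = measure M (space M) ^ card I"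
proof -
  assume "finite I"
  then have "emeasure (PiM I (\<lambda>_. M)) (space (PiM I (\<lambda>_. M))) = ennreal (measure M (space M) ^ card I)"
    by (simp add: emeasure_PiM_const_space emeasure_eq_measure ennreal_power)
  then show ?thesis by (simp add: measure_def)
qed

lemma nn_integral_pair_density:
  assumes [measurable]: "P \<in> borel_measurable M" "Q \<in> borel_measurable M"
    "case_prod g \<in> borel_measurable (M \<Otimes>\<^sub>M M)"
    and "sigma_finite_measure M" "sigma_finite_measure (density M Q)"
  shows "(\<integral>\<^sup>+u. P (fst u) * Q (snd u) * g (fst u) (snd u) \<partial>(M \<Otimes>\<^sub>M M))
       = (\<integral>\<^sup>+u. g (fst u) (snd u) \<partial>(density M P \<Otimes>\<^sub>M density M Q))"
proof -
  interpret sigma_finite_measure M by fact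
  show ?thesis
    using assms by (simp add: pair_measure_density nn_integral_density case_prod_beta)
qed

lemma borel_measurable_snd_fst:
  fixes M :: "('a::topological_space \<times> 'b::topological_space) measure"
  assumes "sets M = sets borel"
  shows "snd \<in> borel_measurable M" "fst \<in> borel_measurable M"
  unfolding measurable_cong_sets[OF assms refl]
  by (intro borel_measurable_continuous_onI continuous_intros)+

lemma nn_integral_pair_marg2:
  fixes G D :: "('a::second_countable_topology \<times> 'b::second_countable_topology) measure"
  assumes "sets G = sets borel" "sets D = sets borel" "sigma_finite_measure (marg2 D)"
    and g[measurable]: "case_prod g \<in> borel_measurable (borel \<Otimes>\<^sub>M borel)"
  shows "(\<integral>\<^sup>+u. g (snd (fst u)) (snd (snd u)) \<partial>(G \<Otimes>\<^sub>M D))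
       = (\<integral>\<^sup>+w. g (fst w) (snd w) \<partial>(marg2 G \<Otimes>\<^sub>M marg2 D))"
proof -
  note [measurable] = borel_measurable_snd_fst(1)[OF assms(1)] borel_measurable_snd_fst(1)[OF assms(2)]
  have "marg2 G \<Otimes>\<^sub>M marg2 D = distr (G \<Otimes>\<^sub>M D) (borel \<Otimes>\<^sub>M borel) (\<lambda>(x, y). (snd x, snd y))"
    using assms(3) unfolding marg2_def by (intro pair_measure_distr) auto
  then show ?thesis
    by (simp add: nn_integral_distr case_prod_beta)
qed

section \<open>Estimating the cross term\<close>

lemma integral_PiM_cross_pair:
  fixes \<mu> G D :: "('a::second_countable_topology \<times> 'b::euclidean_space) measure"
    and V :: "'b \<Rightarrow> real" and a b :: "'k::finite"
  assumes sets_\<mu>: "sets \<mu> = sets borel" and "finite_measure \<mu>"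
    and p[measurable]: "p \<in> borel_measurable \<mu>" and p01: "\<And>x. 0 \<le> p x \<and> p x \<le> 1"
    and G: "G = density \<mu> (\<lambda>x. ennreal (p x))" and D: "D = density \<mu> (\<lambda>x. ennreal (1 - p x))"
    and V[measurable]: "V \<in> borel_measurable borel" and V_nonneg: "\<And>y. 0 \<le> V y"
    and "a \<noteq> b"
  shows "(\<integral>z. p (z a) * (1 - p (z b)) * V (snd (z a) - snd (z b)) \<partial>PiM UNIV (\<lambda>_. \<mu>))
       = measure \<mu> (space \<mu>) ^ (CARD('k) - 2) * (\<integral>w. V (fst w - snd w) \<partial>(marg2 G \<Otimes>\<^sub>M marg2 D))"
proof -
  interpret \<mu>: finite_measure \<mu> by fact
  interpret product_sigma_finite "\<lambda>_::'k. \<mu>" by (rule \<mu>.product_sigma_finite_const)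
  note [measurable] = borel_measurable_snd_fst[OF sets_\<mu>]
  have "finite_measure D"
    unfolding D by (rule \<mu>.finite_measure_density_bounded[where c = 1]) (use p01 in auto)
  have sets_G: "sets G = sets borel" and sets_D: "sets D = sets borel"
    using sets_\<mu> by (simp_all add: G D)
  have "sigma_finite_measure (marg2 D)"
    unfolding marg2_def using borel_measurable_snd_fst(1)[OF sets_D] \<open>finite_measure D\<close>
    by (intro finite_measure.sigma_finite_measure finite_measure.finite_measure_distr) auto
  have sets_marg2: "sets (marg2 G \<Otimes>\<^sub>M marg2 D) = sets (borel \<Otimes>\<^sub>M borel :: ('b \<times> 'b) measure)"
    unfolding marg2_def by (intro sets_pair_measure_cong) simp_all
  have [measurable]: "(\<lambda>w. V (fst w - snd w)) \<in> borel_measurable (marg2 G \<Otimes>\<^sub>M marg2 D)"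
    unfolding measurable_cong_sets[OF sets_marg2 refl] by measurable
  have "(\<integral>\<^sup>+z. ennreal (p (z a) * (1 - p (z b)) * V (snd (z a) - snd (z b))) \<partial>PiM UNIV (\<lambda>_. \<mu>))
      = (\<integral>\<^sup>+z. ennreal (p (z a)) * ennreal (1 - p (z b)) * ennreal (V (snd (z a) - snd (z b))) \<partial>PiM UNIV (\<lambda>_. \<mu>))"
    using p01 V_nonneg by (intro nn_integral_cong) (simp add: ennreal_mult)
  also have "\<dots> = ennreal (measure \<mu> (space \<mu>) ^ (CARD('k) - 2))
      * (\<integral>\<^sup>+u. ennreal (p (fst u)) * ennreal (1 - p (snd u)) * ennreal (V (snd (fst u) - snd (snd u))) \<partial>(\<mu> \<Otimes>\<^sub>M \<mu>))"
    using \<open>a \<noteq> b\<close> by (subst nn_integral_PiM_pair) (auto simp: prod_constant card_Diff_subset numeral_2_eq_2 \<mu>.emeasure_eq_measure ennreal_power)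
  also have "(\<integral>\<^sup>+u. ennreal (p (fst u)) * ennreal (1 - p (snd u)) * ennreal (V (snd (fst u) - snd (snd u))) \<partial>(\<mu> \<Otimes>\<^sub>M \<mu>))
      = (\<integral>\<^sup>+u. ennreal (V (snd (fst u) - snd (snd u))) \<partial>(G \<Otimes>\<^sub>M D))"
    unfolding G D using \<open>finite_measure D\<close>
    by (intro nn_integral_pair_density[where g = "\<lambda>x y. ennreal (V (snd x - snd y))"])
       (auto simp: D intro: \<mu>.sigma_finite_measure_axioms finite_measure.sigma_finite_measure)
  also have "\<dots> = (\<integral>\<^sup>+w. ennreal (V (fst w - snd w)) \<partial>(marg2 G \<Otimes>\<^sub>M marg2 D))"
    using sets_G sets_D \<open>sigma_finite_measure (marg2 D)\<close>
    by (intro nn_integral_pair_marg2[where g = "\<lambda>u v. ennreal (V (u - v))"]) auto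
  finally show ?thesis
    using p01 V_nonneg
    by (simp add: integral_eq_nn_integral enn2real_mult)
qed

lemma integral_PiM_density_compl_diff:
  fixes \<mu> :: "'a measure" and F :: "('i \<Rightarrow> 'a) \<Rightarrow> real"
  assumes "finite_measure \<mu>" "finite I"
    and p[measurable]: "p \<in> borel_measurable \<mu>" and p01: "\<And>x. 0 \<le> p x \<and> p x \<le> 1"
    and F[measurable]: "F \<in> borel_measurable (PiM I (\<lambda>_. \<mu>))" and F_bound: "\<And>z. \<bar>F z\<bar> \<le> B"
  shows "(\<integral>z. F z \<partial>PiM I (\<lambda>_. \<mu>)) - (\<integral>z. F z \<partial>PiM I (\<lambda>_. density \<mu> (\<lambda>x. ennreal (p x))))
      - (\<integral>z. F z \<partial>PiM I (\<lambda>_. density \<mu> (\<lambda>x. ennreal (1 - p x))))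
    = (\<integral>z. (1 - (\<Prod>i\<in>I. p (z i)) - (\<Prod>i\<in>I. 1 - p (z i))) * F z \<partial>PiM I (\<lambda>_. \<mu>))"
proof -
  interpret \<mu>: finite_measure \<mu> by fact
  interpret product_sigma_finite "\<lambda>_. \<mu>" by (rule \<mu>.product_sigma_finite_const)
  interpret P: finite_measure "PiM I (\<lambda>_. \<mu>)" using \<open>finite I\<close> by (rule \<mu>.finite_measure_PiM_const)
  have density_finite: "finite_measure (density \<mu> (\<lambda>x. ennreal (q x)))"
    if "q \<in> borel_measurable \<mu>" "\<And>x. q x \<le> 1" for q
    using that by (intro \<mu>.finite_measure_density_bounded[where c = 1]) auto
  have [measurable]: "(\<lambda>z. \<Prod>i\<in>I. p (z i)) \<in> borel_measurable (PiM I (\<lambda>_. \<mu>))"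
    "(\<lambda>z. \<Prod>i\<in>I. 1 - p (z i)) \<in> borel_measurable (PiM I (\<lambda>_. \<mu>))"
    using \<open>finite I\<close> by measurable
  have weight_bound: "\<bar>(\<Prod>i\<in>I. q (z i)) * F z\<bar> \<le> B" if "\<And>x. 0 \<le> q x \<and> q x \<le> 1" for q z
  proof -
    have "\<bar>\<Prod>i\<in>I. q (z i)\<bar> \<le> 1" using that by (auto simp: abs_prod intro!: prod_le_1)
    then have "\<bar>\<Prod>i\<in>I. q (z i)\<bar> * \<bar>F z\<bar> \<le> 1 * B"
      using F_bound[of z] by (intro mult_mono) auto
    then show ?thesis by (simp add: abs_mult)
  qed
  have "(\<integral>z. F z \<partial>PiM I (\<lambda>_. density \<mu> (\<lambda>x. ennreal (p x)))) = (\<integral>z. (\<Prod>i\<in>I. p (z i)) * F z \<partial>PiM I (\<lambda>_. \<mu>))"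
    using \<open>finite I\<close> p01 density_finite[of p]
    by (intro integral_PiM_density) (auto intro: finite_measure.sigma_finite_measure)
  moreover have "(\<integral>z. F z \<partial>PiM I (\<lambda>_. density \<mu> (\<lambda>x. ennreal (1 - p x))))
      = (\<integral>z. (\<Prod>i\<in>I. 1 - p (z i)) * F z \<partial>PiM I (\<lambda>_. \<mu>))"
    using \<open>finite I\<close> p01 density_finite[of "\<lambda>x. 1 - p x"]
    by (intro integral_PiM_density[where h = "\<lambda>_ x. 1 - p x"]) (auto intro: finite_measure.sigma_finite_measure)
  moreover have "integrable (PiM I (\<lambda>_. \<mu>)) F"
    and "integrable (PiM I (\<lambda>_. \<mu>)) (\<lambda>z. (\<Prod>i\<in>I. p (z i)) * F z)"
    "integrable (PiM I (\<lambda>_. \<mu>)) (\<lambda>z. (\<Prod>i\<in>I. 1 - p (z i)) * F z)"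
    using F_bound weight_bound[of p] weight_bound[of "\<lambda>x. 1 - p x"] p01
    by (auto intro!: P.integrable_const_bound[where B = B])
  ultimately show ?thesis
    by (simp add: left_diff_distrib)
qed

lemma abs_integral_PiM_mixing_weight_le:
  fixes \<mu> :: "('a::second_countable_topology \<times> 'b::euclidean_space) measure"
    and f :: "'a \<Rightarrow> real" and W :: "('k::finite \<Rightarrow> 'b) \<Rightarrow> real" and V :: "'b \<Rightarrow> real"
  assumes sets_\<mu>: "sets \<mu> = sets borel" and "finite_measure \<mu>"
    and p: "p \<in> borel_measurable \<mu>" and p01: "\<And>x. 0 \<le> p x \<and> p x \<le> 1" and f_bound: "\<And>x. \<bar>f x\<bar> \<le> B"
    and V[measurable]: "V \<in> borel_measurable borel" and V_nonneg: "\<And>y. 0 \<le> V y" and V_bound: "\<And>y. V y \<le> B\<^sub>V"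
    and "0 \<le> e" "0 \<le> C" and W_le: "\<And>y a b. \<bar>W y\<bar> \<le> e + C * V (y a - y b)"
    and G: "G = density \<mu> (\<lambda>x. ennreal (p x))" and D: "D = density \<mu> (\<lambda>x. ennreal (1 - p x))"
  shows "\<bar>\<integral>z. (1 - (\<Prod>i\<in>UNIV. p (z i)) - (\<Prod>i\<in>UNIV. 1 - p (z i))) * ((\<Prod>i\<in>UNIV. f (fst (z i))) * W (\<lambda>i. snd (z i)))
          \<partial>PiM UNIV (\<lambda>_. \<mu>)\<bar>
     \<le> B ^ CARD('k) * real (CARD('k) - 1) * (2 * e * measure \<mu> (space \<mu>) ^ CARD('k)
        + 2 * C * (measure \<mu> (space \<mu>) ^ (CARD('k) - 2) * (\<integral>w. V (fst w - snd w) \<partial>(marg2 G \<Otimes>\<^sub>M marg2 D))))"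
    (is "\<bar>\<integral>z. ?h z \<partial>_\<bar> \<le> _")
proof -
  interpret \<mu>: finite_measure \<mu> by fact
  define P where "P = PiM (UNIV::'k set) (\<lambda>_. \<mu>)"
  interpret P: finite_measure P unfolding P_def by (rule \<mu>.finite_measure_PiM_const) simp
  define m where "m = measure \<mu> (space \<mu>)"
  define I where "I = (\<integral>w. V (fst w - snd w) \<partial>(marg2 G \<Otimes>\<^sub>M marg2 D))"
  define T where "T a b z = p (z a) * (1 - p (z b)) * V (snd (z a) - snd (z b))" for a b and z :: "'k \<Rightarrow> 'a \<times> 'b"
  fix i0 :: 'k
  have [measurable]: "(\<lambda>z. snd (z i)) \<in> borel_measurable P" "(\<lambda>z. p (z i)) \<in> borel_measurable P" for i
    unfolding P_def using borel_measurable_snd_fst(1)[OF sets_\<mu>] p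
    by (auto intro: measurable_compose[OF measurable_component_singleton])
  have T_nonneg: "0 \<le> T a b z" and T_bound: "T a b z \<le> B\<^sub>V" for a b z
  proof -
    have "0 \<le> p (z a) * (1 - p (z b))" "p (z a) * (1 - p (z b)) \<le> 1"
      using p01[of "z a"] p01[of "z b"] by (auto intro: mult_le_one)
    then show "0 \<le> T a b z"
      unfolding T_def using V_nonneg by simp
    have "T a b z \<le> 1 * V (snd (z a) - snd (z b))"
      unfolding T_def using \<open>p (z a) * (1 - p (z b)) \<le> 1\<close> V_nonneg by (intro mult_right_mono)
    then show "T a b z \<le> B\<^sub>V"
      using V_bound[of "snd (z a) - snd (z b)"] by linarith
  qed
  have T_integrable: "integrable P (T a b)" for a b
  proof (rule P.integrable_const_bound[where B = B\<^sub>V])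
    show "T a b \<in> borel_measurable P" unfolding T_def by measurable
  qed (use T_nonneg T_bound in \<open>simp add: abs_of_nonneg\<close>)
  have T_integral: "(\<integral>z. T a b z \<partial>P) = m ^ (CARD('k) - 2) * I" if "a \<noteq> b" for a b
    unfolding T_def P_def m_def I_def
    by (rule integral_PiM_cross_pair[OF sets_\<mu> \<open>finite_measure \<mu>\<close> p p01 G D V V_nonneg that])
  have "\<bar>\<integral>z. ?h z \<partial>P\<bar> \<le> (\<integral>z. \<bar>?h z\<bar> \<partial>P)"
    using integral_norm_bound[of P ?h] by simp
  also have "\<dots> \<le> (\<integral>z. B ^ CARD('k) * (\<Sum>j\<in>UNIV - {i0}. 2 * e + C * T i0 j z + C * T j i0 z) \<partial>P)"
  proof (rule integral_mono')
    fix z :: "'k \<Rightarrow> 'a \<times> 'b"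
    show "\<bar>?h z\<bar> \<le> B ^ CARD('k) * (\<Sum>j\<in>UNIV - {i0}. 2 * e + C * T i0 j z + C * T j i0 z)"
      unfolding T_def using p01 f_bound \<open>0 \<le> e\<close> W_le
      by (intro abs_one_minus_prod_minus_prod_compl_mult_le[where v = "\<lambda>a b. V (snd (z a) - snd (z b))"]) auto
    show "0 \<le> B ^ CARD('k) * (\<Sum>j\<in>UNIV - {i0}. 2 * e + C * T i0 j z + C * T j i0 z)"
      using f_bound[of undefined] T_nonneg \<open>0 \<le> e\<close> \<open>0 \<le> C\<close>
      by (intro mult_nonneg_nonneg sum_nonneg add_nonneg_nonneg zero_le_power) auto
  qed (use T_integrable in simp)
  also have "\<dots> = B ^ CARD('k) * (\<Sum>j\<in>UNIV - {i0}. measure P (space P) * (2 * e) + C * (\<integral>z. T i0 j z \<partial>P) + C * (\<integral>z. T j i0 z \<partial>P))"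
    using T_integrable by (simp add: Bochner_Integration.integral_sum mult.assoc)
  also have "\<dots> = B ^ CARD('k) * (\<Sum>j\<in>UNIV - {i0}. 2 * e * m ^ CARD('k) + 2 * C * (m ^ (CARD('k) - 2) * I))"
    using T_integral by (intro arg_cong2[where f = "(*)"] sum.cong refl) (auto simp: P_def m_def \<mu>.measure_PiM_const_space)
  also have "\<dots> = B ^ CARD('k) * real (CARD('k) - 1) * (2 * e * m ^ CARD('k) + 2 * C * (m ^ (CARD('k) - 2) * I))"
    by (simp add: card_Diff_singleton)
  finally show ?thesis
    by (simp only: P_def m_def I_def)
qed

lemma abs_integral_PiM_density_compl_diff_le:
  fixes \<mu> :: "('a::second_countable_topology \<times> 'b::euclidean_space) measure"
    and f :: "'a \<Rightarrow> real" and W :: "('k::finite \<Rightarrow> 'b) \<Rightarrow> real" and V :: "'b \<Rightarrow> real"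
  assumes sets_\<mu>: "sets \<mu> = sets borel" and "finite_measure \<mu>"
    and p: "p \<in> borel_measurable \<mu>" and p01: "\<And>x. 0 \<le> p x \<and> p x \<le> 1"
    and f[measurable]: "f \<in> borel_measurable borel" and f_bound: "\<And>x. \<bar>f x\<bar> \<le> B"
    and W[measurable]: "W \<in> borel_measurable borel"
    and V: "V \<in> borel_measurable borel" "\<And>y. 0 \<le> V y" "\<And>y. V y \<le> B\<^sub>V"
    and "0 \<le> e" "0 \<le> C" and W_le: "\<And>y a b. \<bar>W y\<bar> \<le> e + C * V (y a - y b)"
    and G: "G = density \<mu> (\<lambda>x. ennreal (p x))" and D: "D = density \<mu> (\<lambda>x. ennreal (1 - p x))"
  shows "\<bar>(\<integral>z. (\<Prod>i\<in>UNIV. f (fst (z i))) * W (\<lambda>i. snd (z i)) \<partial>PiM UNIV (\<lambda>_. \<mu>))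
          - (\<integral>z. (\<Prod>i\<in>UNIV. f (fst (z i))) * W (\<lambda>i. snd (z i)) \<partial>PiM UNIV (\<lambda>_. G))
          - (\<integral>z. (\<Prod>i\<in>UNIV. f (fst (z i))) * W (\<lambda>i. snd (z i)) \<partial>PiM UNIV (\<lambda>_. D))\<bar>
     \<le> B ^ CARD('k) * real (CARD('k) - 1) * (2 * e * measure \<mu> (space \<mu>) ^ CARD('k)
        + 2 * C * (measure \<mu> (space \<mu>) ^ (CARD('k) - 2) * (\<integral>w. V (fst w - snd w) \<partial>(marg2 G \<Otimes>\<^sub>M marg2 D))))"
proof -
  define \<Phi> where "\<Phi> z = (\<Prod>i\<in>UNIV. f (fst (z i))) * W (\<lambda>i. snd (z i))" for z :: "'k \<Rightarrow> 'a \<times> 'b"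
  note [measurable] = borel_measurable_snd_fst[OF sets_\<mu>]
  have [measurable]: "(\<lambda>z (i::'k). snd (z i)) \<in> borel_measurable (PiM UNIV (\<lambda>_. \<mu>))"
    by (rule measurable_coordinatewise_then_product)
      (auto intro: measurable_compose[OF measurable_component_singleton])
  have "\<Phi> \<in> borel_measurable (PiM UNIV (\<lambda>_. \<mu>))"
    unfolding \<Phi>_def by measurable
  moreover have "\<bar>\<Phi> z\<bar> \<le> B ^ CARD('k) * (e + C * V 0)" for z
    unfolding \<Phi>_def abs_mult using abs_prod_le_power[of UNIV "\<lambda>i. f (fst (z i))"] f_bound W_le[of _ undefined undefined]
    by (intro mult_mono) (auto intro: order.trans[OF abs_ge_zero])
  ultimately show ?thesis
    using abs_integral_PiM_mixing_weight_le[OF sets_\<mu> \<open>finite_measure \<mu>\<close> p p01 f_bound V \<open>0 \<le> e\<close> \<open>0 \<le> C\<close> W_le G D]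
    unfolding G D \<Phi>_def
    by (subst integral_PiM_density_compl_diff[OF \<open>finite_measure \<mu>\<close> finite_class.finite_UNIV p p01]) auto
qed

lemma abs_integral_PiM_add_measure_diff_le:
  fixes G D :: "('a::second_countable_topology \<times> 'b::euclidean_space) measure"
    and f :: "'a \<Rightarrow> real" and W :: "('k::finite \<Rightarrow> 'b) \<Rightarrow> real" and V :: "'b \<Rightarrow> real"
  assumes "subprob_on G" "subprob_on D"
    and f: "f \<in> borel_measurable borel" "\<And>x. \<bar>f x\<bar> \<le> B"
    and W: "W \<in> borel_measurable borel"
    and V: "V \<in> borel_measurable borel" "\<And>y. 0 \<le> V y" "\<And>y. V y \<le> B\<^sub>V"
    and "0 \<le> e" "0 \<le> C" and W_le: "\<And>y a b. \<bar>W y\<bar> \<le> e + C * V (y a - y b)"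
  shows "\<bar>(\<integral>z. (\<Prod>i\<in>UNIV. f (fst (z i))) * W (\<lambda>i. snd (z i)) \<partial>PiM UNIV (\<lambda>_. add_measure G D))
          - (\<integral>z. (\<Prod>i\<in>UNIV. f (fst (z i))) * W (\<lambda>i. snd (z i)) \<partial>PiM UNIV (\<lambda>_. G))
          - (\<integral>z. (\<Prod>i\<in>UNIV. f (fst (z i))) * W (\<lambda>i. snd (z i)) \<partial>PiM UNIV (\<lambda>_. D))\<bar>
     \<le> B ^ CARD('k) * real (CARD('k) - 1) * 2 ^ (CARD('k) + 1)
        * (e + C * (\<integral>w. V (fst w - snd w) \<partial>(marg2 G \<Otimes>\<^sub>M marg2 D)))"
proof -
  define \<mu> where "\<mu> = add_measure G D"
  define m where "m = measure \<mu> (space \<mu>)"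
  define I where "I = (\<integral>w. V (fst w - snd w) \<partial>(marg2 G \<Otimes>\<^sub>M marg2 D))"
  have sets: "sets G = sets borel" "sets D = sets borel"
    and G_sub: "subprob_space G" and D_sub: "subprob_space D"
    using assms(1,2) by (auto simp: subprob_on_def)
  then have finite: "finite_measure G" "finite_measure D" and sets_DG: "sets D = sets G"
    by (auto intro: subprob_space.axioms)
  obtain p where p: "p \<in> borel_measurable G" "\<And>x. 0 \<le> p x \<and> p x \<le> 1"
    and densities: "G = density \<mu> (\<lambda>x. ennreal (p x))" "D = density \<mu> (\<lambda>x. ennreal (1 - p x))"
    using add_measure_eq_densities[OF sets_DG finite] unfolding \<mu>_def by blast
  have "m = measure G (space G) + measure D (space D)"
    unfolding m_def \<mu>_def using sets_eq_imp_space_eq[OF sets_DG]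
    by (simp add: measure_add_measure[OF sets_DG finite])
  then have "m \<le> 2"
    using subprob_space.subprob_measure_le_1[OF G_sub, of "space G"] subprob_space.subprob_measure_le_1[OF D_sub, of "space D"]
    by linarith
  then have mass_bound: "2 * e * m ^ CARD('k) + 2 * C * (m ^ (CARD('k) - 2) * I) \<le> 2 ^ (CARD('k) + 1) * (e + C * I)"
    using \<open>0 \<le> e\<close> \<open>0 \<le> C\<close> V(2) by (intro mass_le_2_power_bound) (auto simp: m_def I_def)
  have "sets \<mu> = sets borel" "finite_measure \<mu>" "p \<in> borel_measurable \<mu>"
    unfolding \<mu>_def using sets finite_measure_add_measure[OF sets_DG finite] p(1)
    by (auto cong: measurable_cong_sets)
  then have "\<bar>(\<integral>z. (\<Prod>i\<in>UNIV. f (fst (z i))) * W (\<lambda>i. snd (z i)) \<partial>PiM UNIV (\<lambda>_. \<mu>))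
          - (\<integral>z. (\<Prod>i\<in>UNIV. f (fst (z i))) * W (\<lambda>i. snd (z i)) \<partial>PiM UNIV (\<lambda>_. G))
          - (\<integral>z. (\<Prod>i\<in>UNIV. f (fst (z i))) * W (\<lambda>i. snd (z i)) \<partial>PiM UNIV (\<lambda>_. D))\<bar>
     \<le> B ^ CARD('k) * real (CARD('k) - 1) * (2 * e * m ^ CARD('k) + 2 * C * (m ^ (CARD('k) - 2) * I))"
    unfolding m_def I_def
    by (rule abs_integral_PiM_density_compl_diff_le[OF _ _ _ p(2) f W V \<open>0 \<le> e\<close> \<open>0 \<le> C\<close> W_le densities])
  also have "\<dots> \<le> B ^ CARD('k) * real (CARD('k) - 1) * (2 ^ (CARD('k) + 1) * (e + C * I))"
    using f(2) order.trans[OF abs_ge_zero]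
    by (intro mult_left_mono[OF mass_bound] mult_nonneg_nonneg zero_le_power of_nat_0_le_iff) blast
  finally show ?thesis
    unfolding \<mu>_def I_def by (simp only: mult.assoc)
qed

theorem lemma2p4:
  fixes \<gamma> \<delta> :: "nat \<Rightarrow> ('a::polish_space \<times> 'b::euclidean_space) measure"
    and f :: "'a \<Rightarrow> real"
    and W :: "('k::finite \<Rightarrow> 'b) \<Rightarrow> real"
  assumes "\<And>n. subprob_on (\<gamma> n)" and "\<And>n. subprob_on (\<delta> n)"
    and "widely_separated \<gamma> \<delta>"
    and "continuous_on UNIV f" and "bounded (range f)"
    and "CARD('k) \<ge> 2" and "frakC W"
  shows "(\<lambda>n. \<bar>(\<integral>z. (\<Prod>i\<in>UNIV. f (fst (z i))) * W (\<lambda>i. snd (z i))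
                    \<partial>(PiM UNIV (\<lambda>_. add_measure (\<gamma> n) (\<delta> n))))
              - (\<integral>z. (\<Prod>i\<in>UNIV. f (fst (z i))) * W (\<lambda>i. snd (z i)) \<partial>(PiM UNIV (\<lambda>_. \<gamma> n)))
              - (\<integral>z. (\<Prod>i\<in>UNIV. f (fst (z i))) * W (\<lambda>i. snd (z i)) \<partial>(PiM UNIV (\<lambda>_. \<delta> n)))\<bar>)
         \<longlonglongrightarrow> 0"
proof -
  obtain V :: "'b \<Rightarrow> real" where V_cont: "continuous_on UNIV V" and V_pos: "\<And>y. 0 < V y"
    and V_lim: "(V \<longlongrightarrow> 0) at_infinity"
    and I_lim: "(\<lambda>n. \<integral>w. V (fst w - snd w) \<partial>(marg2 (\<gamma> n) \<Otimes>\<^sub>M marg2 (\<delta> n))) \<longlonglongrightarrow> 0"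
    using assms(3) unfolding widely_separated_def by blast
  obtain B where f_bound: "\<And>x. \<bar>f x\<bar> \<le> B"
    using assms(5) unfolding bounded_iff by auto
  obtain B\<^sub>V where "\<And>y. \<bar>V y\<bar> \<le> B\<^sub>V"
    using vanishing_at_infinity_bounded[OF V_cont V_lim] unfolding bounded_iff by auto
  then have V_bound: "V y \<le> B\<^sub>V" for y by (rule abs_le_D1)
  have f_meas: "f \<in> borel_measurable borel" and V_meas: "V \<in> borel_measurable borel"
    and W_meas: "W \<in> borel_measurable borel"
    using assms(4) V_cont assms(7)[unfolded frakC_def, THEN conjunct1]
    by (simp_all add: borel_measurable_continuous_onI)
  have K_nonneg: "0 \<le> B ^ CARD('k) * real (CARD('k) - 1) * 2 ^ (CARD('k) + 1)"
    using order.trans[OF abs_ge_zero f_bound] by simp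
  show ?thesis
  proof (rule tendsto_rabs_zero, rule LIMSEQ_zero_if_eps_bound[OF I_lim K_nonneg], goal_cases)
    case (1 e)
    then obtain C where "0 \<le> C" "\<And>y (a::'k) b. \<bar>W y\<bar> \<le> e + C * V (y a - y b)"
      using frakC_le_eps_plus_multiple[OF assms(7) V_cont V_pos] by blast
    then show ?case
      using 1 V_pos
      by (intro exI[of _ C] allI abs_integral_PiM_add_measure_diff_le[OF assms(1,2) f_meas f_bound W_meas V_meas _ V_bound])
        (auto intro: less_imp_le)
  qed
qed

end
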